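(* Let $m\geq 3$ be an integer and let $P$ be the uniform distribution (normalized one-dimensional length measure) on the boundary of a regular $m$-sided polygon $A_1A_2\cdots A_m$ inscribed in the unit circle $x_1^2+x_2^2=1$ in $\mathbb{R}^2$. Let $\beta=\{A_1,\dots,A_m\}$ be the set of vertices of the polygon, and for $n\geq m$ let $V_n$ denote the $n$th conditional quantization error of $P$ with respect to $\beta$, and $V_\infty=\lim_{n\to\infty}V_n$. Then the conditional quantization coefficient of $P$ exists as a finite positive number and \[\lim_{n\to\infty} n^2\,(V_n-V_\infty)=\frac13\, m^2\sin^2\frac{\pi}{m}.\]
   Context: Conditional quantization: for a Borel probability measure $P$ on $\mathbb{R}^2$ (Euclidean norm $\|\cdot\|$) and a finite set $\beta\subset\mathbb{R}^2$ with $\mathrm{card}(\beta)=\ell$, for $n\geq \ell$ the $n$th conditional quantization error with respect to $\beta$ is $V_n=\inf\{\int \min_{a\in\alpha\cup\beta}\|x-a\|^2\,dP(x):\alpha\subset\mathbb{R}^2,\ \mathrm{card}(\alpha)\leq n-\ell\}$. The vertices may be taken as $A_j=(\cos\theta_j,\sin\theta_j)$ with $\theta_j=\frac{3\pi}{2}-\frac{\pi}{m}+(j-1)\frac{2\pi}{m}$, $1\le j\le m$. *)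

theory Defs
  imports "HOL-Analysis.Analysis"
begin

text \<open>Vertex \<open>A_j\<close> of the regular m-gon inscribed in the unit circle
  (paper indexing j = 1..m; note \<open>poly_vertex m (m+1) = poly_vertex m 1\<close>).\<close>
definition poly_vertex :: "nat \<Rightarrow> nat \<Rightarrow> real^2" where
  "poly_vertex m j =
     (let \<theta> = 3 * pi / 2 - pi / real m + (real j - 1) * (2 * pi / real m)
      in vector [cos \<theta>, sin \<theta>])"

definition poly_vertices :: "nat \<Rightarrow> (real^2) set" where
  "poly_vertices m = poly_vertex m ` {1..m}"

text \<open>Constant-speed (arc-length proportional) parametrization of the boundary
  of the polygon by \<open>t \<in> [0, m]\<close>: on \<open>[j-1, j]\<close> it traverses the side \<open>A_j A_{j+1}\<close>.\<close>
definition poly_curve :: "nat \<Rightarrow> real \<Rightarrow> real^2" where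
  "poly_curve m t =
     (let j = nat \<lfloor>t\<rfloor>; s = t - of_int \<lfloor>t\<rfloor>
      in (1 - s) *\<^sub>R poly_vertex m (j + 1) + s *\<^sub>R poly_vertex m (j + 2))"

definition poly_measure :: "nat \<Rightarrow> (real^2) measure" where
  "poly_measure m = distr (uniform_measure lborel {0..real m}) borel (poly_curve m)"

definition cond_quant_error :: "(real^2) measure \<Rightarrow> (real^2) set \<Rightarrow> nat \<Rightarrow> real" where
  "cond_quant_error M \<beta> n =
     Inf { (\<integral>x. Min ((\<lambda>a. (norm (x - a))\<^sup>2) ` (\<alpha> \<union> \<beta>)) \<partial>M) | \<alpha>.
            finite \<alpha> \<and> card \<alpha> \<le> n - card \<beta> }"

end

theory Submission
  imports Defs "HOL-Real_Asymp.Real_Asymp"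
begin

text \<open>Parametrize the boundary side by side, \<open>s \<mapsto> (1 - s) A_(j+1) + s A_(j+2)\<close> for \<open>s \<in> [0, 1]\<close>;
  every side has length \<open>L = 2 sin (\<pi>/m)\<close>, and the error of a codebook \<open>C \<supseteq> \<beta>\<close> is
  \<open>(1/m) \<Sum>\<^sub>j \<integral>\<^sub>0\<^sup>1 d(side\<^sub>j s, C)\<^sup>2 ds\<close>.

  Upper bound: \<open>k\<close> equally spaced points inside every side give error at most
  \<open>L\<^sup>2 / (12 (k+1)\<^sup>2)\<close>, so \<open>n\<^sup>2 V\<^sub>n \<le> n\<^sup>2 L\<^sup>2 m\<^sup>2 / (12 (n - m)\<^sup>2)\<close>.

  Lower bound: let \<open>C \<supseteq> \<beta>\<close> with \<open>|C| \<le> n\<close>. If its error is at least \<open>1/n\<close> there is nothing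
  to show; otherwise a Lipschitz argument puts every boundary point within \<open>\<epsilon>\<close>, the cube root of
  \<open>8 L m / n\<close>, of \<open>C\<close>. Two sides are far apart away from their common vertex, so no point of
  \<open>C\<close> is nearest to the middle parts (parameter distance \<open>> 8\<epsilon>/L\<^sup>2\<close> from the vertices) of two
  different sides. Grouping the Voronoi cells of the middle parts by codebook point thus gives at
  most \<open>n\<close> lengths of total \<open>m (1 - 16\<epsilon>/L\<^sup>2)\<close>; a cell of length \<open>\<ell>\<close> costs at least
  \<open>L\<^sup>2 \<ell>\<^sup>3 / 12\<close>, and by convexity \<open>\<Sum> \<ell>\<^sub>i\<^sup>3 \<ge> (\<Sum> \<ell>\<^sub>i)\<^sup>3 / n\<^sup>2\<close>, whence
  \<open>n\<^sup>2 V\<^sub>n \<ge> (L\<^sup>2 m\<^sup>2 / 12) (1 - 16\<epsilon>/L\<^sup>2)\<^sup>3\<close>.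

  Both bounds tend to \<open>L\<^sup>2 m\<^sup>2 / 12 = m\<^sup>2 sin\<^sup>2 (\<pi>/m) / 3\<close>; in particular \<open>V\<^sub>n \<rightarrow> 0 = V\<^sub>\<infinity>\<close>.\<close>

lemma integral_combine_uniform_subintervals:
  fixes G :: "real \<Rightarrow> 'a::banach"
  assumes "0 \<le> h" and "\<And>i. i < n \<Longrightarrow> G integrable_on {real i * h..real (Suc i) * h}"
  shows "integral {0..real n * h} G = (\<Sum>i<n. integral {real i * h..real (Suc i) * h} G)"
proof -
  have "G integrable_on {0..real n * h} \<and>
      integral {0..real n * h} G = (\<Sum>i<n. integral {real i * h..real (Suc i) * h} G)"
    using assms(2)
  proof (induction n)
    case 0
    then show ?case
      using integrable_on_refl[of G 0] by simp
  next
    case (Suc n)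
    have split: "0 \<le> real n * h" "real n * h \<le> real (Suc n) * h"
      using \<open>0 \<le> h\<close> by (auto simp: distrib_right)
    have IH: "G integrable_on {0..real n * h}"
      "integral {0..real n * h} G = (\<Sum>i<n. integral {real i * h..real (Suc i) * h} G)"
      using Suc by auto
    have int: "G integrable_on {0..real (Suc n) * h}"
      using Henstock_Kurzweil_Integration.integrable_combine[OF split IH(1)] Suc.prems by simp
    show ?case
      using int Henstock_Kurzweil_Integration.integral_combine[OF split int] IH(2) by simp
  qed
  then show ?thesis ..
qed

lemma integral_power2_diff:
  fixes a b c :: real
  assumes "a \<le> b"
  shows "integral {a..b} (\<lambda>s. (s - c)\<^sup>2) = ((b - c) ^ 3 - (a - c) ^ 3) / 3"
proof -
  have "((\<lambda>s. (s - c)\<^sup>2) has_integral (b - c) ^ 3 / 3 - (a - c) ^ 3 / 3) {a..b}"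
  proof (rule fundamental_theorem_of_calculus[OF assms])
    fix x
    have "((\<lambda>s. (s - c) ^ 3 / 3) has_real_derivative (x - c)\<^sup>2) (at x within {a..b})"
      by (auto intro!: derivative_eq_intros simp: power2_eq_square)
    then show "((\<lambda>s. (s - c) ^ 3 / 3) has_vector_derivative (x - c)\<^sup>2) (at x within {a..b})"
      by (simp add: has_real_derivative_iff_has_vector_derivative)
  qed
  then show ?thesis
    by (simp add: integral_unique diff_divide_distrib)
qed

lemma sum_cubed_le_sum_of_cubes:
  fixes f :: "'a \<Rightarrow> real"
  assumes "\<And>i. i \<in> I \<Longrightarrow> 0 \<le> f i"
  shows "(\<Sum>i\<in>I. f i) ^ 3 \<le> (\<Sum>i\<in>I. f i ^ 3) * (card I)\<^sup>2"
proof (cases "finite I \<and> I \<noteq> {}")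
  case True
  define c where "c = real (card I)"
  have c: "0 < c"
    using True by (simp add: c_def card_gt_0_iff)
  have "(\<Sum>i\<in>I. f i) ^ 3 / c ^ 3 \<le> (\<Sum>i\<in>I. f i ^ 3) / c"
    using convex_on_sum[OF _ _ convex_power_odd, where a = "\<lambda>_. 1 / c" and S = I] True assms
    by (simp add: c_def power_divide flip: sum_divide_distrib)
  then show ?thesis
    using c by (simp add: c_def[symmetric] field_simps power2_eq_square power3_eq_cube)
qed auto

lemma set_integral_power2_diff_centred_interval:
  fixes p \<mu> :: real
  assumes "0 \<le> \<mu>"
  shows "(LINT s:{p - \<mu> / 2..p + \<mu> / 2}|lborel. (s - p)\<^sup>2) = \<mu> ^ 3 / 12"
proof -
  have "set_integrable lborel {p - \<mu> / 2..p + \<mu> / 2} (\<lambda>s. (s - p)\<^sup>2)"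
    by (intro borel_integrable_atLeastAtMost' continuous_intros)
  then have "(LINT s:{p - \<mu> / 2..p + \<mu> / 2}|lborel. (s - p)\<^sup>2) = integral {p - \<mu> / 2..p + \<mu> / 2} (\<lambda>s. (s - p)\<^sup>2)"
    by (rule set_borel_integral_eq_integral(2))
  also have "\<dots> = \<mu> ^ 3 / 12"
    using assms by (simp add: integral_power2_diff power3_eq_cube field_simps)
  finally show ?thesis .
qed

lemma power2_diff_sign_centred_interval:
  fixes s p r :: real
  assumes "0 \<le> r"
  shows "0 \<le> (indicator E s - indicator {p - r..p + r} s) * ((s - p)\<^sup>2 - r\<^sup>2)"
proof (cases "s \<in> {p - r..p + r}")
  case True
  then have "\<bar>s - p\<bar> \<le> r"
    by (auto simp: abs_if)
  then have "(s - p)\<^sup>2 \<le> r\<^sup>2"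
    by (metis abs_ge_zero power2_abs power_mono)
  with True show ?thesis
    by (auto simp: indicator_def mult_nonpos_nonpos)
next
  case False
  then have "r \<le> \<bar>s - p\<bar>"
    by (auto simp: abs_if)
  then have "r\<^sup>2 \<le> (s - p)\<^sup>2"
    using assms by (metis power2_abs power_mono)
  with False show ?thesis
    by (auto simp: indicator_def)
qed

text \<open>Bathtub principle: among sets of measure \<open>\<mu>\<close>, the interval centred at \<open>p\<close> minimises the
  integral of \<open>(s - p)\<^sup>2\<close>.\<close>

lemma measure_cube_le_set_integral_power2_diff:
  fixes E :: "real set"
  assumes E: "E \<in> sets lborel" "E \<subseteq> {a..b}"
  shows "(measure lborel E) ^ 3 / 12 \<le> (LINT s:E|lborel. (s - p)\<^sup>2)"
proof -
  define \<mu> where "\<mu> = measure lborel E"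
  define J where "J = {p - \<mu> / 2..p + \<mu> / 2}"
  have \<mu>: "0 \<le> \<mu>"
    by (simp add: \<mu>_def)
  have "emeasure lborel E \<le> emeasure lborel {a..b}"
    using E by (intro emeasure_mono) auto
  then have E_fin: "emeasure lborel E < \<infinity>"
    by (rule le_less_trans) (simp add: emeasure_lborel_Icc_eq)
  have int_E: "integrable lborel (\<lambda>s. indicator E s * (s - p)\<^sup>2)"
    using set_integrable_subset[OF borel_integrable_atLeastAtMost' E, of "\<lambda>s. (s - p)\<^sup>2"]
    by (simp add: set_integrable_def continuous_intros)
  have int_J: "integrable lborel (\<lambda>s. indicator J s * (s - p)\<^sup>2)"
    using borel_integrable_atLeastAtMost'[of "p - \<mu> / 2" "p + \<mu> / 2" "\<lambda>s. (s - p)\<^sup>2"]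
    by (simp add: set_integrable_def J_def continuous_intros)
  have int_ind: "integrable lborel (\<lambda>s. indicator E s :: real)" "integrable lborel (\<lambda>s. indicator J s :: real)"
    using E(1) E_fin by (auto simp: J_def emeasure_lborel_Icc_eq)
  have "0 \<le> (LINT s|lborel. (indicator E s - indicator J s) * ((s - p)\<^sup>2 - (\<mu> / 2)\<^sup>2))"
    using power2_diff_sign_centred_interval[of "\<mu> / 2"] \<mu>
    by (intro Bochner_Integration.integral_nonneg) (simp add: J_def)
  also have "\<dots> = (LINT s|lborel. indicator E s * (s - p)\<^sup>2) - (LINT s|lborel. indicator J s * (s - p)\<^sup>2)
      - (\<mu> / 2)\<^sup>2 * (measure lborel E - measure lborel J)"
    using int_E int_J int_ind E(1) E_fin
    by (simp add: algebra_simps Bochner_Integration.integral_diff Bochner_Integration.integral_add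
        integrable_diff integrable_add)
  also have "(LINT s|lborel. indicator J s * (s - p)\<^sup>2) = \<mu> ^ 3 / 12"
    using set_integral_power2_diff_centred_interval[OF \<mu>, of p] by (simp add: J_def set_lebesgue_integral_def)
  finally show ?thesis
    using \<mu> by (simp add: \<mu>_def J_def set_lebesgue_integral_def)
qed

lemma sum_comp_eq_comp_sum_if_single_nonzero:
  fixes y :: "'a \<Rightarrow> 'b::comm_monoid_add"
  assumes "finite A" "g 0 = 0"
    and single: "\<And>i j. i \<in> A \<Longrightarrow> j \<in> A \<Longrightarrow> i \<noteq> j \<Longrightarrow> y i = 0 \<or> y j = 0"
  shows "(\<Sum>i\<in>A. g (y i)) = g (\<Sum>i\<in>A. y i)"
proof (cases "\<exists>i\<in>A. y i \<noteq> 0")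
  case True
  then obtain i0 where i0: "i0 \<in> A" "y i0 \<noteq> 0"
    by blast
  have "y i = 0" if "i \<in> A" "i \<noteq> i0" for i
    using single[OF that(1) i0(1) that(2)] i0(2) by auto
  then have "(\<Sum>i\<in>A. g (y i)) = g (y i0)" "(\<Sum>i\<in>A. y i) = y i0"
    using assms(1,2) i0(1) by (simp_all add: sum.remove)
  then show ?thesis
    by simp
next
  case False
  then show ?thesis
    using assms(2) by simp
qed

lemma sum_cubed_le_sum_of_cubes_if_single_nonzero:
  fixes l :: "'a \<Rightarrow> 'b \<Rightarrow> real"
  assumes "finite J" "\<And>j i. 0 \<le> l j i"
    and single: "\<And>i j j'. j \<in> J \<Longrightarrow> j' \<in> J \<Longrightarrow> j \<noteq> j' \<Longrightarrow> l j i = 0 \<or> l j' i = 0"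
  shows "(\<Sum>j\<in>J. \<Sum>i\<in>I. l j i) ^ 3 \<le> (card I)\<^sup>2 * (\<Sum>j\<in>J. \<Sum>i\<in>I. l j i ^ 3)"
proof -
  have "(\<Sum>j\<in>J. \<Sum>i\<in>I. l j i) ^ 3 = (\<Sum>i\<in>I. \<Sum>j\<in>J. l j i) ^ 3"
    by (simp add: sum.swap[of _ J])
  also have "\<dots> \<le> (\<Sum>i\<in>I. (\<Sum>j\<in>J. l j i) ^ 3) * (card I)\<^sup>2"
    using assms(2) by (intro sum_cubed_le_sum_of_cubes sum_nonneg)
  also have "(\<Sum>i\<in>I. (\<Sum>j\<in>J. l j i) ^ 3) = (\<Sum>j\<in>J. \<Sum>i\<in>I. l j i ^ 3)"
    using assms(1) single
    by (simp add: sum_comp_eq_comp_sum_if_single_nonzero[of J "\<lambda>x. x ^ 3", symmetric] sum.swap[of _ I])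
  finally show ?thesis
    by (simp add: mult.commute)
qed

lemma convex_combination_le_sub_gap:
  fixes a b s M g :: real
  assumes "a \<le> M" "b \<le> M" "a \<le> M - g \<or> b \<le> M - g" "0 \<le> g" "0 \<le> s" "s \<le> 1"
  shows "(1 - s) * a + s * b \<le> M - g * min s (1 - s)"
  using assms(3)
proof
  assume "a \<le> M - g"
  then have "(1 - s) * a + s * b \<le> (1 - s) * (M - g) + s * M"
    using assms by (intro add_mono mult_left_mono) auto
  moreover have "g * min s (1 - s) \<le> g * (1 - s)"
    using assms by (intro mult_left_mono) auto
  ultimately show ?thesis
    by (simp add: algebra_simps)
next
  assume "b \<le> M - g"
  then have "(1 - s) * a + s * b \<le> (1 - s) * M + s * (M - g)"
    using assms by (intro add_mono mult_left_mono) auto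
  moreover have "g * min s (1 - s) \<le> g * s"
    using assms by (intro mult_left_mono) auto
  ultimately show ?thesis
    by (simp add: algebra_simps)
qed

section \<open>Distance to a finite set along a Lipschitz curve\<close>

lemma infdist_attained_finite:
  assumes "finite A" "A \<noteq> {}"
  obtains a where "a \<in> A" "infdist x A = dist x a"
proof -
  have "infdist x A = Min (dist x ` A)"
    using assms by (simp add: infdist_notempty cInf_eq_Min)
  moreover have "Min (dist x ` A) \<in> dist x ` A"
    using assms by (intro Min_in) auto
  ultimately show ?thesis
    using that by auto
qed

lemma Min_power2_norm_diff_eq_infdist:
  fixes x :: "'a::real_normed_vector"
  assumes "finite C" "C \<noteq> {}"
  shows "Min ((\<lambda>a. (norm (x - a))\<^sup>2) ` C) = (infdist x C)\<^sup>2"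
proof (rule antisym)
  obtain a0 where "a0 \<in> C" "infdist x C = dist x a0"
    using infdist_attained_finite[OF assms] by blast
  then show "Min ((\<lambda>a. (norm (x - a))\<^sup>2) ` C) \<le> (infdist x C)\<^sup>2"
    using assms(1) by (intro Min_le_iff[THEN iffD2]) (auto simp: dist_norm)
  have "(infdist x C)\<^sup>2 \<le> (norm (x - a))\<^sup>2" if "a \<in> C" for a
    using infdist_le[OF that, of x] by (intro power_mono) (auto simp: dist_norm infdist_nonneg)
  then show "(infdist x C)\<^sup>2 \<le> Min ((\<lambda>a. (norm (x - a))\<^sup>2) ` C)"
    using assms by (intro Min.boundedI) auto
qed

lemma power2_infdist_le_lipschitz:
  fixes \<gamma> :: "real \<Rightarrow> 'a::metric_space"
  assumes "L-lipschitz_on UNIV \<gamma>" and "\<gamma> x \<in> C"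
  shows "(infdist (\<gamma> s) C)\<^sup>2 \<le> L\<^sup>2 * (s - x)\<^sup>2"
proof -
  have "infdist (\<gamma> s) C \<le> dist (\<gamma> s) (\<gamma> x)"
    by (rule infdist_le[OF assms(2)])
  also have "\<dots> \<le> L * \<bar>s - x\<bar>"
    using lipschitz_onD[OF assms(1), of s x] by (simp add: dist_real_def)
  finally have "(infdist (\<gamma> s) C)\<^sup>2 \<le> (L * \<bar>s - x\<bar>)\<^sup>2"
    by (intro power_mono infdist_nonneg)
  then show ?thesis
    by (simp add: power_mult_distrib)
qed

lemma continuous_on_power2_infdist_lipschitz:
  fixes \<gamma> :: "real \<Rightarrow> 'a::metric_space"
  assumes "L-lipschitz_on UNIV \<gamma>"
  shows "continuous_on A (\<lambda>s. (infdist (\<gamma> s) C)\<^sup>2)"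
  using lipschitz_on_continuous_on[OF assms]
  by (intro continuous_intros) (auto intro: continuous_on_subset)

lemma integral_power2_infdist_le_cell:
  fixes \<gamma> :: "real \<Rightarrow> 'a::metric_space"
  assumes lip: "L-lipschitz_on UNIV \<gamma>" and "a \<le> b" and ends: "\<gamma> a \<in> C" "\<gamma> b \<in> C"
  shows "integral {a..b} (\<lambda>s. (infdist (\<gamma> s) C)\<^sup>2) \<le> L\<^sup>2 * (b - a) ^ 3 / 12"
proof -
  define c where "c = (a + b) / 2"
  let ?G = "\<lambda>s. (infdist (\<gamma> s) C)\<^sup>2"
  have G_int: "?G integrable_on {x..y}" for x y
    by (intro integrable_continuous_interval continuous_on_power2_infdist_lipschitz[OF lip])
  have "integral {a..c} ?G \<le> integral {a..c} (\<lambda>s. L\<^sup>2 * (s - a)\<^sup>2)"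
    using power2_infdist_le_lipschitz[OF lip ends(1)]
    by (intro integral_le G_int integrable_continuous_interval continuous_intros) auto
  moreover have "integral {c..b} ?G \<le> integral {c..b} (\<lambda>s. L\<^sup>2 * (s - b)\<^sup>2)"
    using power2_infdist_le_lipschitz[OF lip ends(2)]
    by (intro integral_le G_int integrable_continuous_interval continuous_intros) auto
  moreover have "integral {a..c} ?G + integral {c..b} ?G = integral {a..b} ?G"
    using \<open>a \<le> b\<close> by (intro Henstock_Kurzweil_Integration.integral_combine G_int) (auto simp: c_def)
  ultimately show ?thesis
    using \<open>a \<le> b\<close>
    by (simp add: c_def integral_power2_diff power3_eq_cube field_simps)
qed

lemma integral_power2_infdist_le_grid:
  fixes \<gamma> :: "real \<Rightarrow> 'a::metric_space"
  assumes lip: "L-lipschitz_on UNIV \<gamma>" and "0 < h" and grid: "\<And>i. i \<le> n \<Longrightarrow> \<gamma> (real i * h) \<in> C"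
  shows "integral {0..real n * h} (\<lambda>s. (infdist (\<gamma> s) C)\<^sup>2) \<le> real n * (L\<^sup>2 * h ^ 3 / 12)"
proof -
  let ?G = "\<lambda>s. (infdist (\<gamma> s) C)\<^sup>2"
  have G_int: "?G integrable_on {x..y}" for x y
    by (intro integrable_continuous_interval continuous_on_power2_infdist_lipschitz[OF lip])
  have "integral {0..real n * h} ?G = (\<Sum>i<n. integral {real i * h..real (Suc i) * h} ?G)"
    using \<open>0 < h\<close> by (intro integral_combine_uniform_subintervals G_int) auto
  also have "\<dots> \<le> (\<Sum>i<n. L\<^sup>2 * h ^ 3 / 12)"
  proof (rule sum_mono)
    fix i assume "i \<in> {..<n}"
    then have "integral {real i * h..real (Suc i) * h} ?G \<le> L\<^sup>2 * (real (Suc i) * h - real i * h) ^ 3 / 12"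
      using \<open>0 < h\<close> grid[of i] grid[of "Suc i"]
      by (intro integral_power2_infdist_le_cell[OF lip]) auto
    then show "integral {real i * h..real (Suc i) * h} ?G \<le> L\<^sup>2 * h ^ 3 / 12"
      by (simp add: algebra_simps)
  qed
  finally show ?thesis
    by simp
qed

lemma infdist_cube_le_integral_power2_infdist:
  fixes \<gamma> :: "real \<Rightarrow> 'a::metric_space"
  assumes lip: "L-lipschitz_on UNIV \<gamma>" and "0 < L" and "\<gamma> a \<in> C" and t: "a \<le> t" "t \<le> b"
  shows "(infdist (\<gamma> t) C) ^ 3 \<le> 8 * L * integral {a..b} (\<lambda>s. (infdist (\<gamma> s) C)\<^sup>2)"
proof -
  let ?G = "\<lambda>s. (infdist (\<gamma> s) C)\<^sup>2"
  define r where "r = infdist (\<gamma> t) C"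
  define \<delta> where "\<delta> = r / (2 * L)"
  have r: "0 \<le> r" "r \<le> L * (t - a)"
    using infdist_le[OF \<open>\<gamma> a \<in> C\<close>, of "\<gamma> t"] lipschitz_onD[OF lip, of t a] t
    by (auto simp: r_def infdist_nonneg dist_real_def)
  have \<delta>: "0 \<le> \<delta>" "\<delta> \<le> t - a"
    using r \<open>0 < L\<close> by (auto simp: \<delta>_def field_simps)
  \<comment> \<open>\<open>infdist\<close> is 1-Lipschitz, so it stays above \<open>r / 2\<close> on the interval of length \<open>\<delta>\<close> ending at \<open>t\<close>.\<close>
  have low: "(r / 2)\<^sup>2 \<le> ?G s" if "s \<in> {t - \<delta>..t}" for s
  proof -
    have "r \<le> infdist (\<gamma> s) C + L * \<bar>t - s\<bar>"
      using infdist_triangle[of "\<gamma> t" C "\<gamma> s"] lipschitz_onD[OF lip, of t s]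
      by (simp add: r_def dist_real_def)
    moreover have "L * \<bar>t - s\<bar> \<le> r / 2"
      using that \<open>0 < L\<close> by (auto simp: \<delta>_def field_simps)
    ultimately show ?thesis
      using r(1) by (intro power_mono) auto
  qed
  have G_int: "?G integrable_on {x..y}" for x y
    by (intro integrable_continuous_interval continuous_on_power2_infdist_lipschitz[OF lip])
  have "\<delta> * (r / 2)\<^sup>2 = integral {t - \<delta>..t} (\<lambda>s. (r / 2)\<^sup>2)"
    using \<delta> by simp
  also have "\<dots> \<le> integral {t - \<delta>..t} ?G"
    using low by (intro integral_le G_int) auto
  also have "\<dots> \<le> integral {a..b} ?G"
    using \<delta> t by (intro integral_subset_le G_int) auto
  finally have "\<delta> * (r / 2)\<^sup>2 \<le> integral {a..b} ?G" .
  then show ?thesis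
    using \<open>0 < L\<close> by (simp add: r_def[symmetric] \<delta>_def field_simps power2_eq_square power3_eq_cube)
qed

section \<open>Voronoi cells along a curve\<close>

text \<open>Ties are broken in favour of the least index, so that the cells partition \<open>S\<close>.\<close>

definition voronoi_cell ::
    "(real \<Rightarrow> 'a::metric_space) \<Rightarrow> (nat \<Rightarrow> 'a) \<Rightarrow> nat \<Rightarrow> real set \<Rightarrow> nat \<Rightarrow> real set" where
  "voronoi_cell \<gamma> c N S i = {s \<in> S. dist (\<gamma> s) (c i) = infdist (\<gamma> s) (c ` {..<N})
      \<and> (\<forall>k<i. dist (\<gamma> s) (c k) \<noteq> infdist (\<gamma> s) (c ` {..<N}))}"

lemma voronoi_cell_subset: "voronoi_cell \<gamma> c N S i \<subseteq> S"
  by (auto simp: voronoi_cell_def)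

lemma dist_voronoi_cell:
  "s \<in> voronoi_cell \<gamma> c N S i \<Longrightarrow> dist (\<gamma> s) (c i) = infdist (\<gamma> s) (c ` {..<N})"
  by (simp add: voronoi_cell_def)

lemma disjoint_family_voronoi_cell: "disjoint_family (voronoi_cell \<gamma> c N S)"
  unfolding disjoint_family_on_def
proof (intro ballI impI)
  have *: "voronoi_cell \<gamma> c N S i \<inter> voronoi_cell \<gamma> c N S j = {}" if "i < j" for i j
    using that by (auto simp: voronoi_cell_def)
  fix i j :: nat
  assume "i \<noteq> j"
  then show "voronoi_cell \<gamma> c N S i \<inter> voronoi_cell \<gamma> c N S j = {}"
    using *[of i j] *[of j i] by (cases "i < j") (auto simp: Int_commute)
qed

lemma UN_voronoi_cell:
  assumes "0 < N"
  shows "(\<Union>i<N. voronoi_cell \<gamma> c N S i) = S"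
proof (intro equalityI subsetI)
  fix s assume "s \<in> S"
  let ?P = "\<lambda>k. dist (\<gamma> s) (c k) = infdist (\<gamma> s) (c ` {..<N})"
  obtain a where "a \<in> c ` {..<N}" "infdist (\<gamma> s) (c ` {..<N}) = dist (\<gamma> s) a"
    using infdist_attained_finite[of "c ` {..<N}"] assms by blast
  then obtain i where "i < N" "?P i"
    by auto
  define i0 where "i0 = (LEAST k. ?P k)"
  have "?P i0" "i0 \<le> i" "\<And>k. k < i0 \<Longrightarrow> \<not> ?P k"
    unfolding i0_def using \<open>?P i\<close> by (auto intro: LeastI Least_le dest: not_less_Least)
  then have "s \<in> voronoi_cell \<gamma> c N S i0" "i0 < N"
    using \<open>s \<in> S\<close> \<open>i < N\<close> unfolding voronoi_cell_def by auto
  then show "s \<in> (\<Union>i<N. voronoi_cell \<gamma> c N S i)"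
    by blast
qed (auto simp: voronoi_cell_def)

lemma sets_voronoi_cell:
  assumes "continuous_on UNIV \<gamma>" and "S \<in> sets lborel"
  shows "voronoi_cell \<gamma> c N S i \<in> sets lborel"
proof -
  have cont: "continuous_on UNIV (\<lambda>s. dist (\<gamma> s) (c k))" "continuous_on UNIV (\<lambda>s. infdist (\<gamma> s) (c ` {..<N}))"
    for k
    using assms(1) by (auto intro!: continuous_intros)
  have "voronoi_cell \<gamma> c N S i = S \<inter> {s. dist (\<gamma> s) (c i) = infdist (\<gamma> s) (c ` {..<N})}
      \<inter> (\<Inter>k\<in>{..<i}. {s. dist (\<gamma> s) (c k) \<noteq> infdist (\<gamma> s) (c ` {..<N})})"
    by (auto simp: voronoi_cell_def)
  also have "\<dots> \<in> sets lborel"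
  proof -
    have "{s. dist (\<gamma> s) (c i) = infdist (\<gamma> s) (c ` {..<N})} \<in> sets lborel"
      using cont by (simp add: borel_closed closed_Collect_eq)
    moreover have "{s. dist (\<gamma> s) (c k) \<noteq> infdist (\<gamma> s) (c ` {..<N})} \<in> sets lborel" for k
      using cont by (simp add: borel_open open_Collect_neq)
    ultimately show ?thesis
      using assms(2) by (cases "i = 0") (simp_all add: sets.finite_INT)
  qed
  finally show ?thesis .
qed

lemma sum_measure_voronoi_cell:
  assumes "continuous_on UNIV \<gamma>" and "0 < N" and S: "S \<in> sets lborel" "S \<subseteq> {a..b}"
  shows "(\<Sum>i<N. measure lborel (voronoi_cell \<gamma> c N S i)) = measure lborel S"
proof -
  have sub: "voronoi_cell \<gamma> c N S i \<subseteq> {a..b}" for i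
    using voronoi_cell_subset S(2) by blast
  have fin: "emeasure lborel (voronoi_cell \<gamma> c N S i) \<noteq> \<infinity>" for i
  proof -
    have "emeasure lborel (voronoi_cell \<gamma> c N S i) \<le> emeasure lborel {a..b}"
      using sub by (intro emeasure_mono) auto
    also have "\<dots> < \<infinity>"
      by (simp add: emeasure_lborel_Icc_eq)
    finally show ?thesis
      by (rule less_imp_neq)
  qed
  have "measure lborel (\<Union>i<N. voronoi_cell \<gamma> c N S i) = (\<Sum>i<N. measure lborel (voronoi_cell \<gamma> c N S i))"
    using disjoint_family_on_mono[OF subset_UNIV disjoint_family_voronoi_cell]
      sets_voronoi_cell[OF assms(1) S(1)] fin
    by (intro measure_finite_Union) auto
  then show ?thesis
    unfolding UN_voronoi_cell[OF \<open>0 < N\<close>] by simp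
qed

lemma set_integral_power2_infdist_voronoi_cell:
  assumes "continuous_on UNIV \<gamma>" and "0 < N" and S: "S \<in> sets lborel" "S \<subseteq> {a..b}"
  shows "(LINT s:S|lborel. (infdist (\<gamma> s) (c ` {..<N}))\<^sup>2)
      = (\<Sum>i<N. LINT s:voronoi_cell \<gamma> c N S i|lborel. (dist (\<gamma> s) (c i))\<^sup>2)"
proof -
  let ?G = "\<lambda>s. (infdist (\<gamma> s) (c ` {..<N}))\<^sup>2"
  have sub: "voronoi_cell \<gamma> c N S i \<subseteq> {a..b}" for i
    using voronoi_cell_subset S(2) by blast
  have "continuous_on {a..b} \<gamma>"
    using assms(1) continuous_on_subset by blast
  then have "continuous_on {a..b} ?G"
    by (intro continuous_intros)
  then have G_int: "set_integrable lborel (voronoi_cell \<gamma> c N S i) ?G" for i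
    by (rule set_integrable_subset[OF borel_integrable_atLeastAtMost' sets_voronoi_cell[OF assms(1) S(1)] sub])
  have "(LINT s:(\<Union>i<N. voronoi_cell \<gamma> c N S i)|lborel. ?G s)
      = (\<Sum>i<N. LINT s:voronoi_cell \<gamma> c N S i|lborel. ?G s)"
    using disjoint_family_on_mono[OF subset_UNIV disjoint_family_voronoi_cell]
    by (intro set_integral_finite_Union G_int sets_voronoi_cell[OF assms(1) S(1)]) auto
  then have "(LINT s:S|lborel. ?G s) = (\<Sum>i<N. LINT s:voronoi_cell \<gamma> c N S i|lborel. ?G s)"
    by (simp only: UN_voronoi_cell[OF \<open>0 < N\<close>])
  also have "\<dots> = (\<Sum>i<N. LINT s:voronoi_cell \<gamma> c N S i|lborel. (dist (\<gamma> s) (c i))\<^sup>2)"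
    by (intro sum.cong refl set_lebesgue_integral_cong sets_voronoi_cell[OF assms(1) S(1)])
       (simp add: dist_voronoi_cell)
  finally show ?thesis .
qed

lemma power2_dist_segment_ge:
  fixes p q a :: "'a::real_inner"
  obtains t where "\<And>s. (dist p q)\<^sup>2 * (s - t)\<^sup>2 \<le> (dist ((1 - s) *\<^sub>R p + s *\<^sub>R q) a)\<^sup>2"
proof (cases "p = q")
  case True
  then show ?thesis
    using that by simp
next
  case False
  define u where "u = q - p"
  define w where "w = a - p"
  define L where "L = dist p q"
  have "norm u = L"
    by (simp add: u_def L_def dist_norm norm_minus_commute)
  then have L: "0 < L" "u \<bullet> u = L\<^sup>2"
    using False by (auto simp: L_def simp flip: power2_norm_eq_inner)
  have "(w \<bullet> u)\<^sup>2 \<le> (w \<bullet> w) * L\<^sup>2"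
    using Cauchy_Schwarz_ineq[of w u] L by simp
  then have *: "L\<^sup>2 * (s - (w \<bullet> u) / L\<^sup>2)\<^sup>2 \<le> s\<^sup>2 * L\<^sup>2 - 2 * s * (w \<bullet> u) + w \<bullet> w" for s
    using L by (simp add: field_simps power2_eq_square)
  have "(dist ((1 - s) *\<^sub>R p + s *\<^sub>R q) a)\<^sup>2 = s\<^sup>2 * L\<^sup>2 - 2 * s * (w \<bullet> u) + w \<bullet> w" for s
  proof -
    have "(1 - s) *\<^sub>R p + s *\<^sub>R q - a = s *\<^sub>R u - w"
      by (simp add: u_def w_def algebra_simps)
    then have "(dist ((1 - s) *\<^sub>R p + s *\<^sub>R q) a)\<^sup>2 = (s *\<^sub>R u - w) \<bullet> (s *\<^sub>R u - w)"
      by (simp add: dist_norm power2_norm_eq_inner)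
    also have "\<dots> = s\<^sup>2 * L\<^sup>2 - 2 * s * (w \<bullet> u) + w \<bullet> w"
      using L by (simp add: inner_diff_left inner_diff_right inner_commute power2_eq_square algebra_simps)
    finally show ?thesis .
  qed
  then show ?thesis
    using that[of "(w \<bullet> u) / L\<^sup>2"] * by (simp add: L_def)
qed

lemma set_integral_power2_dist_segment_ge:
  fixes p q a :: "'a::real_inner"
  assumes E: "E \<in> sets lborel" "E \<subseteq> {lo..hi}"
  shows "(dist p q)\<^sup>2 * (measure lborel E) ^ 3 / 12 \<le> (LINT s:E|lborel. (dist ((1 - s) *\<^sub>R p + s *\<^sub>R q) a)\<^sup>2)"
proof -
  obtain t where t: "\<And>s. (dist p q)\<^sup>2 * (s - t)\<^sup>2 \<le> (dist ((1 - s) *\<^sub>R p + s *\<^sub>R q) a)\<^sup>2"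
    using power2_dist_segment_ge by blast
  have int: "set_integrable lborel E f" if "continuous_on UNIV f" for f :: "real \<Rightarrow> real"
    using that E by (intro set_integrable_subset[OF borel_integrable_atLeastAtMost']) (auto intro: continuous_on_subset)
  have "(dist p q)\<^sup>2 * (measure lborel E) ^ 3 / 12 \<le> (dist p q)\<^sup>2 * (LINT s:E|lborel. (s - t)\<^sup>2)"
    using mult_left_mono[OF measure_cube_le_set_integral_power2_diff[OF E, of t] zero_le_power2]
    by simp
  also have "\<dots> = (LINT s:E|lborel. (dist p q)\<^sup>2 * (s - t)\<^sup>2)"
    by (simp add: set_integral_mult_right)
  also have "\<dots> \<le> (LINT s:E|lborel. (dist ((1 - s) *\<^sub>R p + s *\<^sub>R q) a)\<^sup>2)"
    using t by (intro set_integral_mono int) (auto intro!: continuous_intros)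
  finally show ?thesis .
qed

section \<open>The regular polygon\<close>

text \<open>Side \<open>j\<close> runs from \<open>A_(j+1)\<close> to \<open>A_(j+2)\<close>, as \<^const>\<open>poly_curve\<close> does on \<open>[j, j+1]\<close>.\<close>

definition poly_side :: "nat \<Rightarrow> nat \<Rightarrow> real \<Rightarrow> real^2" where
  "poly_side m j s = (1 - s) *\<^sub>R poly_vertex m (j + 1) + s *\<^sub>R poly_vertex m (j + 2)"

definition poly_side_length :: "nat \<Rightarrow> real" where
  "poly_side_length m = 2 * sin (pi / real m)"

definition poly_angle :: "nat \<Rightarrow> nat \<Rightarrow> real" where
  "poly_angle m i = 3 * pi / 2 - pi / real m + (real i - 1) * (2 * pi / real m)"

lemma poly_vertex_polar: "poly_vertex m i = vector [cos (poly_angle m i), sin (poly_angle m i)]"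
  by (simp add: poly_vertex_def poly_angle_def Let_def)

lemma inner_poly_vertex:
  "poly_vertex m i \<bullet> poly_vertex m k = cos (2 * pi * real_of_int (int i - int k) / real m)"
proof -
  have "poly_vertex m i \<bullet> poly_vertex m k
      = cos (poly_angle m i) * cos (poly_angle m k) + sin (poly_angle m i) * sin (poly_angle m k)"
    by (simp add: poly_vertex_polar inner_vec_def UNIV_2)
  also have "\<dots> = cos (poly_angle m i - poly_angle m k)"
    by (simp add: cos_diff)
  also have "poly_angle m i - poly_angle m k = 2 * pi * real_of_int (int i - int k) / real m"
    by (cases "m = 0") (simp_all add: poly_angle_def field_simps)
  finally show ?thesis .
qed

lemma norm_poly_vertex [simp]: "norm (poly_vertex m i) = 1"
  using inner_poly_vertex[of m i i] by (simp add: norm_eq_sqrt_inner)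

lemma poly_vertex_add_period:
  assumes "0 < m"
  shows "poly_vertex m (j + m) = poly_vertex m j"
proof -
  have "poly_angle m (j + m) = poly_angle m j + 2 * pi"
    using assms by (simp add: poly_angle_def field_simps)
  then show ?thesis
    by (simp add: poly_vertex_polar)
qed

lemma poly_side_length_nonneg: "0 \<le> poly_side_length m"
  unfolding poly_side_length_def
  by (cases "m = 0") (auto intro!: sin_ge_zero simp: field_simps)

lemma poly_side_length_pos:
  assumes "2 \<le> m"
  shows "0 < poly_side_length m"
  unfolding poly_side_length_def using assms by (intro mult_pos_pos sin_gt_zero) (auto simp: field_simps)

lemma power2_poly_side_length: "(poly_side_length m)\<^sup>2 = 2 * (1 - cos (2 * pi / real m))"
  using cos_double_sin[of "pi / real m"] by (simp add: poly_side_length_def power_mult_distrib)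

lemma dist_poly_vertex_side:
  "dist (poly_vertex m (j + 1)) (poly_vertex m (j + 2)) = poly_side_length m"
proof -
  have "(dist (poly_vertex m (j + 1)) (poly_vertex m (j + 2)))\<^sup>2
      = poly_vertex m (j + 1) \<bullet> poly_vertex m (j + 1) + poly_vertex m (j + 2) \<bullet> poly_vertex m (j + 2)
        - 2 * (poly_vertex m (j + 1) \<bullet> poly_vertex m (j + 2))"
    by (simp add: dist_norm power2_norm_eq_inner inner_diff_left inner_diff_right inner_commute)
  also have "\<dots> = (poly_side_length m)\<^sup>2"
    by (simp add: inner_poly_vertex power2_poly_side_length)
  finally show ?thesis
    using poly_side_length_nonneg by (simp add: power2_eq_iff_nonneg)
qed

lemma poly_side_0 [simp]: "poly_side m j 0 = poly_vertex m (j + 1)"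
  and poly_side_1 [simp]: "poly_side m j 1 = poly_vertex m (j + 2)"
  by (simp_all add: poly_side_def)

lemma dist_poly_side: "dist (poly_side m j s) (poly_side m j t) = poly_side_length m * \<bar>s - t\<bar>"
proof -
  have "poly_side m j s - poly_side m j t = (s - t) *\<^sub>R (poly_vertex m (j + 2) - poly_vertex m (j + 1))"
    by (simp add: poly_side_def algebra_simps)
  then show ?thesis
    using dist_poly_vertex_side[of m j] by (simp add: dist_norm norm_minus_commute mult.commute)
qed

lemma lipschitz_on_poly_side: "(poly_side_length m)-lipschitz_on UNIV (poly_side m j)"
  by (rule lipschitz_onI) (simp_all add: dist_poly_side dist_real_def poly_side_length_nonneg)

lemma poly_vertex_mem_vertices:
  assumes "0 < m" "j < m"
  shows "poly_vertex m (j + 1) \<in> poly_vertices m" "poly_vertex m (j + 2) \<in> poly_vertices m"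
proof -
  show "poly_vertex m (j + 1) \<in> poly_vertices m"
    using assms by (auto simp: poly_vertices_def)
  show "poly_vertex m (j + 2) \<in> poly_vertices m"
  proof (cases "j + 2 \<le> m")
    case True
    then show ?thesis
      by (auto simp: poly_vertices_def)
  next
    case False
    then have "j + 2 = 1 + m"
      using assms by auto
    then show ?thesis
      using poly_vertex_add_period[of m 1] assms by (auto simp: poly_vertices_def)
  qed
qed

lemma finite_poly_vertices [simp]: "finite (poly_vertices m)"
  by (simp add: poly_vertices_def)

lemma card_poly_vertices_le: "card (poly_vertices m) \<le> m"
  unfolding poly_vertices_def using card_image_le[of "{1..m}" "poly_vertex m"] by simp

lemma cos_le_cos_2pi_div:
  fixes k :: int
  assumes "\<not> int m dvd k"
  shows "cos (2 * pi * k / m) \<le> cos (2 * pi / m)"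
proof (cases "m = 0")
  case False
  define r where "r = k mod int m"
  have "0 \<le> r" "r < int m" "r \<noteq> 0"
    using assms False by (auto simp: r_def dvd_eq_mod_eq_0)
  then have r: "1 \<le> r" "r \<le> int m - 1"
    by auto
  have "k = r + int m * (k div int m)"
    by (simp add: r_def)
  then have "real_of_int k = r + real m * real_of_int (k div int m)"
    by (metis of_int_add of_int_mult of_int_of_nat_eq)
  then have "2 * pi * k / m = 2 * pi * r / m + real_of_int (k div int m) * (2 * pi)"
    using False by (simp add: field_simps)
  then have "cos (2 * pi * k / m) = cos (2 * pi * r / m + real_of_int (k div int m) * (2 * pi))"
    by simp
  also have "\<dots> = cos (2 * pi * r / m)"
    using cos.plus_of_int[of "2 * pi * r / m" "k div int m"] by simp
  also have "\<dots> \<le> cos (2 * pi / m)"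
  proof (cases "2 * pi * r / m \<le> pi")
    case True
    then show ?thesis
      using r False by (intro cos_monotone_0_pi_le) (auto simp: field_simps)
  next
    case False
    have "cos (2 * pi * r / m) = cos (2 * pi - 2 * pi * r / m)"
      by (simp add: cos_diff)
    also have "\<dots> \<le> cos (2 * pi / m)"
    proof (intro cos_monotone_0_pi_le)
      have "(1 + real_of_int r) * (2 * pi) \<le> real m * (2 * pi)"
        using r by (intro mult_right_mono) (linarith, simp)
      then show "2 * pi / m \<le> 2 * pi - 2 * pi * r / m"
        using \<open>m \<noteq> 0\<close> by (simp add: field_simps)
    qed (use False in auto)
    finally show ?thesis .
  qed
  finally show ?thesis .
qed simp

text \<open>\<open>A_(j+1) + A_(j+2)\<close> is an outer normal of side \<open>j\<close>: the linear functional it defines attains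
  its maximum \<open>1 + cos (2\<pi>/m)\<close> over the polygon exactly on side \<open>j\<close>, and drops linearly in the
  distance from the endpoints along any other side.\<close>

definition poly_side_normal :: "nat \<Rightarrow> nat \<Rightarrow> real^2" where
  "poly_side_normal m j = poly_vertex m (j + 1) + poly_vertex m (j + 2)"

lemma inner_poly_vertex_side_normal:
  "poly_vertex m i \<bullet> poly_side_normal m j
    = cos (2 * pi * real_of_int (int i - int j - 1) / m) + cos (2 * pi * real_of_int (int i - int j - 2) / m)"
  by (simp add: poly_side_normal_def inner_add_right inner_poly_vertex algebra_simps)

lemma inner_poly_vertex_side_normal_le:
  assumes "3 \<le> m"
  shows "poly_vertex m i \<bullet> poly_side_normal m j \<le> 1 + cos (2 * pi / m)"
proof -
  define d where "d = int i - int j - 1"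
  have "poly_vertex m i \<bullet> poly_side_normal m j
      = cos (2 * pi * real_of_int d / m) + cos (2 * pi * real_of_int (d - 1) / m)"
    by (simp add: inner_poly_vertex_side_normal d_def algebra_simps)
  moreover have "\<not> int m dvd d \<or> \<not> int m dvd (d - 1)"
    using assms dvd_diff[of "int m" d "d - 1"] by (auto simp: zdvd1_eq)
  ultimately show ?thesis
    using cos_le_cos_2pi_div[of m d] cos_le_cos_2pi_div[of m "d - 1"]
      cos_le_one[of "2 * pi * real_of_int d / m"] cos_le_one[of "2 * pi * real_of_int (d - 1) / m"]
    by linarith
qed

lemma inner_poly_vertex_side_normal_le_off_side:
  assumes "\<not> int m dvd (int i - int j - 1)" "\<not> int m dvd (int i - int j - 2)"
  shows "poly_vertex m i \<bullet> poly_side_normal m j \<le> 2 * cos (2 * pi / m)"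
  using cos_le_cos_2pi_div[OF assms(1)] cos_le_cos_2pi_div[OF assms(2)]
  by (simp add: inner_poly_vertex_side_normal)

lemma inner_poly_side_normal_same:
  "poly_side m j s \<bullet> poly_side_normal m j = 1 + cos (2 * pi / m)"
proof -
  have "poly_vertex m (j + 1) \<bullet> poly_side_normal m j = 1 + cos (2 * pi / m)"
    "poly_vertex m (j + 2) \<bullet> poly_side_normal m j = 1 + cos (2 * pi / m)"
    by (simp_all add: inner_poly_vertex_side_normal)
  then show ?thesis
    by (simp add: poly_side_def inner_add_left algebra_simps)
qed

lemma inner_poly_side_normal_other:
  assumes "3 \<le> m" and j: "j < m" "j' < m" "j \<noteq> j'" and s: "0 \<le> s" "s \<le> 1"
  shows "poly_side m j s \<bullet> poly_side_normal m j'
    \<le> 1 + cos (2 * pi / m) - (1 - cos (2 * pi / m)) * min s (1 - s)"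
proof -
  define d where "d = int j - int j'"
  have "d \<noteq> 0" "\<bar>d\<bar> < int m"
    using j by (auto simp: d_def)
  then have "\<not> int m dvd d"
    using dvd_imp_le_int[of d "int m"] by auto
  moreover have "\<not> (int m dvd (d - 1) \<and> int m dvd (d + 1))"
  proof
    assume "int m dvd (d - 1) \<and> int m dvd (d + 1)"
    then have "int m dvd 2"
      using dvd_diff[of "int m" "d + 1" "d - 1"] by simp
    then show False
      using assms(1) zdvd_imp_le[of "int m" 2] by simp
  qed
  \<comment> \<open>At least one endpoint of side \<open>j\<close> is not a vertex of side \<open>j'\<close>.\<close>
  ultimately have "poly_vertex m (j + 1) \<bullet> poly_side_normal m j' \<le> 2 * cos (2 * pi / m)
      \<or> poly_vertex m (j + 2) \<bullet> poly_side_normal m j' \<le> 2 * cos (2 * pi / m)"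
    using inner_poly_vertex_side_normal_le_off_side[of m "j + 1" j']
      inner_poly_vertex_side_normal_le_off_side[of m "j + 2" j']
    by (force simp: d_def algebra_simps)
  then have "(1 - s) * (poly_vertex m (j + 1) \<bullet> poly_side_normal m j')
      + s * (poly_vertex m (j + 2) \<bullet> poly_side_normal m j')
      \<le> 1 + cos (2 * pi / m) - (1 - cos (2 * pi / m)) * min s (1 - s)"
    using inner_poly_vertex_side_normal_le[OF assms(1)] s
    by (intro convex_combination_le_sub_gap) auto
  then show ?thesis
    by (simp add: poly_side_def inner_add_left)
qed

lemma poly_side_separation:
  assumes "3 \<le> m" and "j < m" "j' < m" "j \<noteq> j'" and "0 \<le> s" "s \<le> 1"
  shows "(poly_side_length m)\<^sup>2 * min s (1 - s) \<le> 4 * dist (poly_side m j s) (poly_side m j' s')"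
proof -
  let ?u = "poly_side_normal m j'"
  have "norm ?u \<le> 2"
    using norm_triangle_ineq[of "poly_vertex m (j' + 1)" "poly_vertex m (j' + 2)"]
    by (simp add: poly_side_normal_def)
  have "(1 - cos (2 * pi / m)) * min s (1 - s) \<le> (poly_side m j' s' - poly_side m j s) \<bullet> ?u"
    using inner_poly_side_normal_other[OF assms] inner_poly_side_normal_same[of m j' s']
    by (simp add: inner_diff_left)
  also have "\<dots> \<le> norm (poly_side m j' s' - poly_side m j s) * norm ?u"
    using Cauchy_Schwarz_ineq2 abs_ge_self order_trans by blast
  also have "\<dots> \<le> norm (poly_side m j' s' - poly_side m j s) * 2"
    using \<open>norm ?u \<le> 2\<close> by (intro mult_left_mono) auto
  finally show ?thesis
    by (simp add: power2_poly_side_length dist_norm norm_minus_commute algebra_simps)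
qed

section \<open>The uniform measure on the boundary\<close>

lemma poly_curve_eq_side:
  assumes "0 \<le> s" "s \<le> 1"
  shows "poly_curve m (real j + s) = poly_side m j s"
proof (cases "s = 1")
  case True
  have "\<lfloor>real j + 1\<rfloor> = int j + 1"
    by linarith
  then show ?thesis
    using True by (simp add: poly_curve_def poly_side_def Let_def nat_add_distrib)
next
  case False
  then have "\<lfloor>real j + s\<rfloor> = int j"
    using assms by linarith
  then show ?thesis
    by (simp add: poly_curve_def poly_side_def Let_def)
qed

lemma norm_poly_side_le:
  assumes "0 \<le> s" "s \<le> 1"
  shows "norm (poly_side m j s) \<le> 1"
proof -
  have "norm (poly_side m j s) \<le> norm ((1 - s) *\<^sub>R poly_vertex m (j + 1)) + norm (s *\<^sub>R poly_vertex m (j + 2))"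
    unfolding poly_side_def by (rule norm_triangle_ineq)
  then show ?thesis
    using assms by simp
qed

lemma norm_poly_curve_le:
  assumes "0 \<le> t"
  shows "norm (poly_curve m t) \<le> 1"
proof -
  define j where "j = nat \<lfloor>t\<rfloor>"
  have "real j \<le> t" "t < real j + 1"
    using assms by (simp_all add: j_def)
  then show ?thesis
    using poly_curve_eq_side[of "t - real j" m j] norm_poly_side_le[of "t - real j" m j] by simp
qed

lemma measurable_poly_curve [measurable]: "poly_curve m \<in> borel_measurable borel"
proof -
  define f where "f = (\<lambda>(k::int) (t::real).
    (1 - (t - of_int k)) *\<^sub>R poly_vertex m (nat k + 1) + (t - of_int k) *\<^sub>R poly_vertex m (nat k + 2))"
  have "poly_curve m = (\<lambda>t. f \<lfloor>t\<rfloor> t)"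
    by (auto simp: f_def poly_curve_def Let_def fun_eq_iff)
  moreover have "(\<lambda>t. f \<lfloor>t\<rfloor> t) \<in> borel_measurable borel"
  proof (rule measurable_compose_countable'[where f = f and g = floor and I = UNIV])
    fix k :: int
    have "continuous_on UNIV (f k)"
      unfolding f_def by (intro continuous_intros)
    then show "(\<lambda>t. f k t) \<in> borel_measurable borel"
      by (simp add: borel_measurable_continuous_onI)
  qed auto
  ultimately show ?thesis
    by simp
qed

lemma integral_uniform_measure_Icc:
  fixes g :: "real \<Rightarrow> real"
  assumes "a < b" and [measurable]: "g \<in> borel_measurable borel"
  shows "integral\<^sup>L (uniform_measure lborel {a..b}) g = (LINT t:{a..b}|lborel. g t) / (b - a)"
proof -
  have "uniform_measure lborel {a..b} = density lborel (\<lambda>t. ennreal (indicator {a..b} t / (b - a)))"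
    unfolding uniform_measure_def using assms(1)
    using divide_ennreal[of 1 "b - a"] by (intro density_cong) (auto simp: indicator_def)
  then have "integral\<^sup>L (uniform_measure lborel {a..b}) g
      = (LINT t|lborel. (indicator {a..b} t / (b - a)) *\<^sub>R g t)"
    using assms(1) by (simp add: integral_density)
  also have "\<dots> = (LINT t|lborel. indicator {a..b} t *\<^sub>R g t) / (b - a)"
    by (simp flip: integral_divide_zero)
  finally show ?thesis
    by (simp add: set_lebesgue_integral_def)
qed

lemma set_integrable_poly_curve:
  fixes F :: "real^2 \<Rightarrow> real"
  assumes F: "continuous_on UNIV F"
  shows "set_integrable lborel {0..real m} (\<lambda>t. F (poly_curve m t))"
proof -
  have [measurable]: "F \<in> borel_measurable borel"
    using F by (rule borel_measurable_continuous_onI)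
  have "bounded (F ` cball 0 1)"
    by (intro compact_imp_bounded compact_continuous_image continuous_on_subset[OF F]) auto
  then obtain B where "\<forall>y\<in>F ` cball 0 1. norm y \<le> B"
    unfolding bounded_iff by blast
  then have "norm (F (poly_curve m t)) \<le> B" if "0 \<le> t" for t
    using norm_poly_curve_le[OF that] by simp
  then show ?thesis
    unfolding set_integrable_def by (intro integrableI_bounded_set_indicator[where B = B]) auto
qed

lemma integral_poly_curve_side:
  fixes F :: "real^2 \<Rightarrow> real"
  assumes F: "continuous_on UNIV F"
  shows "(\<lambda>t. F (poly_curve m t)) integrable_on {real j..real (Suc j)}"
    and "integral {real j..real (Suc j)} (\<lambda>t. F (poly_curve m t)) = integral {0..1} (\<lambda>s. F (poly_side m j s))"
proof -
  have "(\<lambda>t. F (poly_side m j (t - real j))) integrable_on {real j..real (Suc j)}"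
    unfolding poly_side_def by (intro integrable_continuous_interval continuous_on_compose2[OF F])
      (auto intro!: continuous_intros)
  then show "(\<lambda>t. F (poly_curve m t)) integrable_on {real j..real (Suc j)}"
  proof (rule integrable_eq)
    fix t assume "t \<in> {real j..real (Suc j)}"
    then show "F (poly_side m j (t - real j)) = F (poly_curve m t)"
      using poly_curve_eq_side[of "t - real j" m j] by simp
  qed
  have "integral {real j..real (Suc j)} (\<lambda>t. F (poly_curve m t))
      = integral {0 + real j..1 + real j} (\<lambda>t. F (poly_curve m t))"
    by (simp add: add.commute)
  also have "\<dots> = integral {0..1} (\<lambda>s. F (poly_curve m (real j + s)))"
    by (simp only: integral_shift_Icc_real[symmetric] comp_def)
  also have "\<dots> = integral {0..1} (\<lambda>s. F (poly_side m j s))"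
    by (intro integral_cong) (simp add: poly_curve_eq_side)
  finally show "integral {real j..real (Suc j)} (\<lambda>t. F (poly_curve m t))
      = integral {0..1} (\<lambda>s. F (poly_side m j s))" .
qed

lemma integral_poly_measure:
  fixes F :: "real^2 \<Rightarrow> real"
  assumes "0 < m" and F: "continuous_on UNIV F"
  shows "integral\<^sup>L (poly_measure m) F = (\<Sum>j<m. integral {0..1} (\<lambda>s. F (poly_side m j s))) / m"
proof -
  have [measurable]: "F \<in> borel_measurable borel"
    using F by (rule borel_measurable_continuous_onI)
  have "integral\<^sup>L (poly_measure m) F = integral\<^sup>L (uniform_measure lborel {0..real m}) (\<lambda>t. F (poly_curve m t))"
    unfolding poly_measure_def
  proof (rule integral_distr)
    have "measurable (uniform_measure lborel {0..real m}) borel = measurable borel borel"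
      by (rule measurable_cong_sets) auto
    then show "poly_curve m \<in> measurable (uniform_measure lborel {0..real m}) borel"
      using measurable_poly_curve by simp
  qed simp
  also have "\<dots> = integral {0..real m} (\<lambda>t. F (poly_curve m t)) / m"
    using assms(1) set_borel_integral_eq_integral(2)[OF set_integrable_poly_curve[OF F]]
    by (subst integral_uniform_measure_Icc) auto
  also have "integral {0..real m} (\<lambda>t. F (poly_curve m t))
      = (\<Sum>j<m. integral {real j..real (Suc j)} (\<lambda>t. F (poly_curve m t)))"
    using integral_combine_uniform_subintervals[of 1 m "\<lambda>t. F (poly_curve m t)"]
      integral_poly_curve_side(1)[OF F] by simp
  also have "\<dots> = (\<Sum>j<m. integral {0..1} (\<lambda>s. F (poly_side m j s)))"
    by (intro sum.cong refl integral_poly_curve_side(2)[OF F])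
  finally show ?thesis .
qed

section \<open>Conditional quantization error\<close>

lemma Min_power2_norm_diff_nonneg:
  fixes x :: "'a::real_normed_vector"
  assumes "finite C" "C \<noteq> {}"
  shows "0 \<le> Min ((\<lambda>a. (norm (x - a))\<^sup>2) ` C)"
  using assms by (intro Min.boundedI) auto

lemma cond_quant_error_le:
  assumes "finite \<beta>" "\<beta> \<noteq> {}" "finite \<alpha>" "card \<alpha> \<le> n - card \<beta>"
  shows "cond_quant_error M \<beta> n \<le> (\<integral>x. Min ((\<lambda>a. (norm (x - a))\<^sup>2) ` (\<alpha> \<union> \<beta>)) \<partial>M)"
  unfolding cond_quant_error_def
proof (rule cInf_lower)
  show "bdd_below {\<integral>x. Min ((\<lambda>a. (norm (x - a))\<^sup>2) ` (\<alpha> \<union> \<beta>)) \<partial>M | \<alpha>. finite \<alpha> \<and> card \<alpha> \<le> n - card \<beta>}"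
    using assms(1,2)
    by (intro bdd_belowI[where m = 0]) (auto intro!: Bochner_Integration.integral_nonneg Min_power2_norm_diff_nonneg)
qed (use assms(3,4) in blast)

lemma cond_quant_error_ge:
  assumes "\<And>\<alpha>. finite \<alpha> \<Longrightarrow> card \<alpha> \<le> n - card \<beta> \<Longrightarrow> b \<le> (\<integral>x. Min ((\<lambda>a. (norm (x - a))\<^sup>2) ` (\<alpha> \<union> \<beta>)) \<partial>M)"
  shows "b \<le> cond_quant_error M \<beta> n"
  unfolding cond_quant_error_def
proof (rule cInf_greatest)
  show "{\<integral>x. Min ((\<lambda>a. (norm (x - a))\<^sup>2) ` (\<alpha> \<union> \<beta>)) \<partial>M | \<alpha>. finite \<alpha> \<and> card \<alpha> \<le> n - card \<beta>} \<noteq> {}"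
    by (auto intro!: exI[of _ "{}"])
qed (use assms in blast)

lemma cond_quant_error_nonneg:
  assumes "finite \<beta>" "\<beta> \<noteq> {}"
  shows "0 \<le> cond_quant_error M \<beta> n"
  using assms by (intro cond_quant_error_ge Bochner_Integration.integral_nonneg Min_power2_norm_diff_nonneg) auto

lemma poly_vertices_nonempty: "0 < m \<Longrightarrow> poly_vertices m \<noteq> {}"
  by (simp add: poly_vertices_def)

definition poly_side_error :: "nat \<Rightarrow> (real^2) set \<Rightarrow> real" where
  "poly_side_error m C = (\<Sum>j<m. integral {0..1} (\<lambda>s. (infdist (poly_side m j s) C)\<^sup>2))"

lemma integral_power2_infdist_poly_side_nonneg:
  "0 \<le> integral {0..1} (\<lambda>s. (infdist (poly_side m j s) C)\<^sup>2)"
  by (intro Henstock_Kurzweil_Integration.integral_nonneg integrable_continuous_interval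
      continuous_on_power2_infdist_lipschitz[OF lipschitz_on_poly_side]) auto

lemma poly_side_error_nonneg: "0 \<le> poly_side_error m C"
  by (simp add: poly_side_error_def sum_nonneg integral_power2_infdist_poly_side_nonneg)

lemma integral_poly_measure_quant:
  assumes "0 < m" "finite \<alpha>"
  shows "(\<integral>x. Min ((\<lambda>a. (norm (x - a))\<^sup>2) ` (\<alpha> \<union> poly_vertices m)) \<partial>poly_measure m)
    = poly_side_error m (\<alpha> \<union> poly_vertices m) / m"
proof -
  let ?C = "\<alpha> \<union> poly_vertices m"
  have "(\<lambda>x. Min ((\<lambda>a. (norm (x - a))\<^sup>2) ` ?C)) = (\<lambda>x. (infdist x ?C)\<^sup>2)"
    using assms poly_vertices_nonempty[of m] by (simp add: Min_power2_norm_diff_eq_infdist)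
  then show ?thesis
    using assms(1)
    by (simp add: integral_poly_measure poly_side_error_def continuous_on_infdist continuous_intros)
qed

section \<open>Upper bound\<close>

definition poly_grid :: "nat \<Rightarrow> nat \<Rightarrow> (real^2) set" where
  "poly_grid m k = (\<lambda>(j, i). poly_side m j (real i / real (Suc k))) ` ({..<m} \<times> {1..k})"

lemma finite_poly_grid [simp]: "finite (poly_grid m k)"
  by (simp add: poly_grid_def)

lemma card_poly_grid_le: "card (poly_grid m k) \<le> m * k"
  unfolding poly_grid_def using card_image_le[of "{..<m} \<times> {1..k}"] by simp

lemma poly_side_grid_mem:
  assumes "0 < m" "j < m" "i \<le> Suc k"
  shows "poly_side m j (real i * (1 / real (Suc k))) \<in> poly_grid m k \<union> poly_vertices m"
proof -
  consider "i = 0" | "i = Suc k" | "1 \<le> i \<and> i \<le> k"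
    using assms(3) by linarith
  then show ?thesis
  proof cases
    case 3
    then have "(j, i) \<in> {..<m} \<times> {1..k}"
      using assms(2) by auto
    then show ?thesis
      unfolding poly_grid_def by (intro UnI1 image_eqI[where x = "(j, i)"]) auto
  qed (use poly_vertex_mem_vertices[OF assms(1,2)] in auto)
qed

lemma integral_power2_infdist_poly_grid_le:
  assumes "0 < m" "j < m"
  shows "integral {0..1} (\<lambda>s. (infdist (poly_side m j s) (poly_grid m k \<union> poly_vertices m))\<^sup>2)
    \<le> (poly_side_length m)\<^sup>2 / (12 * (real (Suc k))\<^sup>2)"
proof -
  have "integral {0..real (Suc k) * (1 / real (Suc k))}
      (\<lambda>s. (infdist (poly_side m j s) (poly_grid m k \<union> poly_vertices m))\<^sup>2)
    \<le> real (Suc k) * ((poly_side_length m)\<^sup>2 * (1 / real (Suc k)) ^ 3 / 12)"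
    by (rule integral_power2_infdist_le_grid[OF lipschitz_on_poly_side])
       (use poly_side_grid_mem[OF assms] in auto)
  moreover have "x * (a * (1 / x) ^ 3 / 12) = a / (12 * x\<^sup>2)" if "0 < x" for x a :: real
    using that by (simp add: field_simps power3_eq_cube power2_eq_square)
  ultimately show ?thesis
    by simp
qed

lemma diff_less_mult_Suc_div:
  assumes "0 < m" "m \<le> n"
  shows "real n - real m < real m * real (Suc ((n - m) div m))"
proof -
  have "n - m < m * Suc ((n - m) div m)"
    using mult_div_mod_eq[of m "n - m"] mod_less_divisor[OF assms(1), of "n - m"]
    unfolding mult_Suc_right by linarith
  then have "real (n - m) < real (m * Suc ((n - m) div m))"
    by (simp only: of_nat_less_iff)
  then show ?thesis
    using assms(2) by (simp add: of_nat_diff algebra_simps)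
qed

lemma poly_cond_quant_error_le:
  assumes "3 \<le> m" "m < n"
  shows "cond_quant_error (poly_measure m) (poly_vertices m) n
    \<le> (poly_side_length m)\<^sup>2 * (real m)\<^sup>2 / (12 * (real n - real m)\<^sup>2)"
proof -
  define k where "k = (n - m) div m"
  have "card (poly_grid m k) \<le> m * k"
    by (rule card_poly_grid_le)
  also have "\<dots> \<le> n - m"
    unfolding k_def by (rule times_div_less_eq_dividend)
  also have "\<dots> \<le> n - card (poly_vertices m)"
    by (intro diff_le_mono2 card_poly_vertices_le)
  finally have "card (poly_grid m k) \<le> n - card (poly_vertices m)" .
  then have "cond_quant_error (poly_measure m) (poly_vertices m) n
      \<le> poly_side_error m (poly_grid m k \<union> poly_vertices m) / m"
    using assms(1) poly_vertices_nonempty[of m]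
    by (simp add: cond_quant_error_le flip: integral_poly_measure_quant)
  also have "\<dots> \<le> (\<Sum>j<m. (poly_side_length m)\<^sup>2 / (12 * (real (Suc k))\<^sup>2)) / m"
    unfolding poly_side_error_def using assms(1)
    by (intro divide_right_mono sum_mono integral_power2_infdist_poly_grid_le) auto
  also have "\<dots> = (poly_side_length m)\<^sup>2 / (12 * (real (Suc k))\<^sup>2)"
    using assms(1) by simp
  also have "\<dots> \<le> (poly_side_length m)\<^sup>2 * (real m)\<^sup>2 / (12 * (real n - real m)\<^sup>2)"
  proof -
    have "(real n - real m)\<^sup>2 \<le> (real m * real (Suc k))\<^sup>2"
      using diff_less_mult_Suc_div[of m n] assms by (intro power_mono) (auto simp: k_def)
    then have "(poly_side_length m)\<^sup>2 * (real n - real m)\<^sup>2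
        \<le> (poly_side_length m)\<^sup>2 * (real m * real (Suc k))\<^sup>2"
      by (rule mult_left_mono) simp
    also have "\<dots> = (real m)\<^sup>2 * ((poly_side_length m)\<^sup>2 * (real (Suc k))\<^sup>2)"
      by (simp add: power_mult_distrib mult_ac)
    finally show ?thesis
      using assms by (simp add: field_simps)
  qed
  finally show ?thesis .
qed

section \<open>Lower bound\<close>

lemma infdist_poly_side_le_root_error:
  assumes "3 \<le> m" "poly_vertices m \<subseteq> C" "j < m" "0 \<le> s" "s \<le> 1"
  shows "infdist (poly_side m j s) C \<le> root 3 (8 * poly_side_length m * poly_side_error m C)"
proof -
  have "(infdist (poly_side m j s) C) ^ 3
      \<le> 8 * poly_side_length m * integral {0..1} (\<lambda>s. (infdist (poly_side m j s) C)\<^sup>2)"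
    using assms poly_vertex_mem_vertices[of m j] poly_side_length_pos[of m]
    by (intro infdist_cube_le_integral_power2_infdist[OF lipschitz_on_poly_side]) auto
  also have "\<dots> \<le> 8 * poly_side_length m * poly_side_error m C"
    unfolding poly_side_error_def using assms(3) poly_side_length_nonneg[of m]
    by (intro mult_left_mono member_le_sum integral_power2_infdist_poly_side_nonneg) auto
  finally show ?thesis
    using real_root_le_mono[of 3] real_root_power_cancel[of 3 "infdist (poly_side m j s) C"]
    by (metis infdist_nonneg zero_less_numeral)
qed

lemma integral_power2_infdist_poly_side_ge_cells:
  assumes "0 < N" and M: "M \<in> sets lborel" "M \<subseteq> {0..1}"
  shows "(poly_side_length m)\<^sup>2 / 12 * (\<Sum>i<N. (measure lborel (voronoi_cell (poly_side m j) c N M i)) ^ 3)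
    \<le> integral {0..1} (\<lambda>s. (infdist (poly_side m j s) (c ` {..<N}))\<^sup>2)"
proof -
  let ?E = "voronoi_cell (poly_side m j) c N M"
  let ?G = "\<lambda>s. (infdist (poly_side m j s) (c ` {..<N}))\<^sup>2"
  have cont: "continuous_on UNIV (poly_side m j)"
    by (rule lipschitz_on_continuous_on[OF lipschitz_on_poly_side])
  have E: "?E i \<in> sets lborel" "?E i \<subseteq> {0..1}" for i
    using sets_voronoi_cell[OF cont M(1)] voronoi_cell_subset M(2) by blast+
  have G_int: "set_integrable lborel M ?G"
    by (intro set_integrable_subset[OF borel_integrable_atLeastAtMost' M]
        continuous_on_power2_infdist_lipschitz[OF lipschitz_on_poly_side])
  have "(poly_side_length m)\<^sup>2 / 12 * (\<Sum>i<N. (measure lborel (?E i)) ^ 3)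
      = (\<Sum>i<N. (dist (poly_vertex m (j + 1)) (poly_vertex m (j + 2)))\<^sup>2 * (measure lborel (?E i)) ^ 3 / 12)"
    using dist_poly_vertex_side[of m j] by (simp add: sum_distrib_left)
  also have "\<dots> \<le> (\<Sum>i<N. LINT s:?E i|lborel. (dist (poly_side m j s) (c i))\<^sup>2)"
  proof (rule sum_mono)
    fix i
    show "(dist (poly_vertex m (j + 1)) (poly_vertex m (j + 2)))\<^sup>2 * (measure lborel (?E i)) ^ 3 / 12
        \<le> (LINT s:?E i|lborel. (dist (poly_side m j s) (c i))\<^sup>2)"
      using set_integral_power2_dist_segment_ge[OF E(1)[of i] E(2)[of i], of "poly_vertex m (j + 1)" "poly_vertex m (j + 2)" "c i"]
      by (simp only: poly_side_def[symmetric])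
  qed
  also have "\<dots> = (LINT s:M|lborel. ?G s)"
    using set_integral_power2_infdist_voronoi_cell[OF cont \<open>0 < N\<close> M] by simp
  also have "\<dots> = integral M ?G"
    by (rule set_borel_integral_eq_integral(2)[OF G_int])
  also have "\<dots> \<le> integral {0..1} ?G"
    using M(2) set_borel_integral_eq_integral(1)[OF G_int]
    by (intro integral_subset_le integrable_continuous_interval
        continuous_on_power2_infdist_lipschitz[OF lipschitz_on_poly_side]) auto
  finally show ?thesis .
qed

lemma poly_voronoi_cell_middle_single_side:
  fixes m :: nat and \<epsilon> :: real
  defines "\<eta> \<equiv> 8 * \<epsilon> / (poly_side_length m)\<^sup>2"
  assumes "3 \<le> m" and "0 \<le> \<epsilon>"
    and near: "\<And>j s. j < m \<Longrightarrow> s \<in> {0..1} \<Longrightarrow> infdist (poly_side m j s) (c ` {..<N}) \<le> \<epsilon>"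
    and "j < m" "j' < m" "j \<noteq> j'"
  shows "voronoi_cell (poly_side m j) c N {\<eta><..<1 - \<eta>} i = {}
    \<or> voronoi_cell (poly_side m j') c N {\<eta><..<1 - \<eta>} i = {}"
proof (rule ccontr)
  assume "\<not> ?thesis"
  then obtain s s' where s: "s \<in> voronoi_cell (poly_side m j) c N {\<eta><..<1 - \<eta>} i"
    and s': "s' \<in> voronoi_cell (poly_side m j') c N {\<eta><..<1 - \<eta>} i"
    by blast
  have L: "0 < (poly_side_length m)\<^sup>2"
    using poly_side_length_pos[of m] assms(2) by simp
  have "0 \<le> \<eta>"
    using \<open>0 \<le> \<epsilon>\<close> by (simp add: \<eta>_def)
  have s_mid: "s \<in> {\<eta><..<1 - \<eta>}" "s' \<in> {\<eta><..<1 - \<eta>}"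
    using s s' voronoi_cell_subset by blast+
  then have s01: "s \<in> {0..1}" "s' \<in> {0..1}"
    using \<open>0 \<le> \<eta>\<close> by auto
  have "(poly_side_length m)\<^sup>2 * min s (1 - s) \<le> 4 * dist (poly_side m j s) (poly_side m j' s')"
    using s01 by (intro poly_side_separation) (use assms in auto)
  also have "\<dots> \<le> 4 * (dist (poly_side m j s) (c i) + dist (poly_side m j' s') (c i))"
    using dist_triangle2[of "poly_side m j s" "poly_side m j' s'" "c i"] by simp
  also have "\<dots> \<le> 4 * (\<epsilon> + \<epsilon>)"
    using dist_voronoi_cell[OF s] dist_voronoi_cell[OF s'] near[OF \<open>j < m\<close> s01(1)] near[OF \<open>j' < m\<close> s01(2)]
    by simp
  finally have "min s (1 - s) \<le> \<eta>"
    using L by (simp add: \<eta>_def field_simps)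
  then show False
    using s_mid(1) by auto
qed

lemma poly_side_error_ge_enum:
  fixes m :: nat and \<epsilon> :: real
  defines "\<eta> \<equiv> 8 * \<epsilon> / (poly_side_length m)\<^sup>2"
  assumes "3 \<le> m" "0 < N" "0 \<le> \<epsilon>"
    and near: "\<And>j s. j < m \<Longrightarrow> s \<in> {0..1} \<Longrightarrow> infdist (poly_side m j s) (c ` {..<N}) \<le> \<epsilon>"
  shows "(poly_side_length m)\<^sup>2 / 12 * (real m * (1 - 2 * \<eta>)) ^ 3
    \<le> (real N)\<^sup>2 * poly_side_error m (c ` {..<N})"
proof (cases "1 - 2 * \<eta> \<le> 0")
  case True
  then have "(real m * (1 - 2 * \<eta>)) ^ 3 \<le> 0"
    by (simp add: mult_nonneg_nonpos power3_eq_cube mult_nonpos_nonpos)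
  then show ?thesis
    by (intro order_trans[OF _ mult_nonneg_nonneg] mult_nonneg_nonpos poly_side_error_nonneg) auto
next
  case False
  define M where "M = {\<eta><..<1 - \<eta>}"
  let ?E = "\<lambda>j. voronoi_cell (poly_side m j) c N M"
  have "0 \<le> \<eta>"
    using \<open>0 \<le> \<epsilon>\<close> by (simp add: \<eta>_def)
  then have M: "M \<in> sets lborel" "M \<subseteq> {0..1}" "measure lborel M = 1 - 2 * \<eta>"
    using False by (auto simp: M_def)
  have cont: "continuous_on UNIV (poly_side m j)" for j
    by (rule lipschitz_on_continuous_on[OF lipschitz_on_poly_side])
  have "(\<Sum>j<m. \<Sum>i<N. measure lborel (?E j i)) = real m * (1 - 2 * \<eta>)"
    using sum_measure_voronoi_cell[OF cont \<open>0 < N\<close> M(1,2)] M(3) by simp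
  moreover have "measure lborel (?E j i) = 0 \<or> measure lborel (?E j' i) = 0"
    if "j \<in> {..<m}" "j' \<in> {..<m}" "j \<noteq> j'" for i j j'
    using poly_voronoi_cell_middle_single_side[OF assms(2,4) near, of j j' i] that
    by (auto simp: M_def \<eta>_def)
  ultimately have "(real m * (1 - 2 * \<eta>)) ^ 3 \<le> (real N)\<^sup>2 * (\<Sum>j<m. \<Sum>i<N. (measure lborel (?E j i)) ^ 3)"
    using sum_cubed_le_sum_of_cubes_if_single_nonzero[of "{..<m}" "\<lambda>j i. measure lborel (?E j i)" "{..<N}"]
    by simp
  then have "(poly_side_length m)\<^sup>2 / 12 * (real m * (1 - 2 * \<eta>)) ^ 3
      \<le> (poly_side_length m)\<^sup>2 / 12 * ((real N)\<^sup>2 * (\<Sum>j<m. \<Sum>i<N. (measure lborel (?E j i)) ^ 3))"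
    by (rule mult_left_mono) simp
  also have "\<dots> = (real N)\<^sup>2 * (\<Sum>j<m. (poly_side_length m)\<^sup>2 / 12 * (\<Sum>i<N. (measure lborel (?E j i)) ^ 3))"
    by (simp add: sum_distrib_left mult_ac)
  also have "\<dots> \<le> (real N)\<^sup>2 * (\<Sum>j<m. integral {0..1} (\<lambda>s. (infdist (poly_side m j s) (c ` {..<N}))\<^sup>2))"
    using integral_power2_infdist_poly_side_ge_cells[OF \<open>0 < N\<close> M(1,2)]
    by (intro mult_left_mono sum_mono) auto
  finally show ?thesis
    unfolding poly_side_error_def .
qed

lemma poly_side_error_ge_of_near:
  assumes "3 \<le> m" "finite C" "poly_vertices m \<subseteq> C" "card C \<le> n" "0 \<le> \<epsilon>"
    and near: "\<And>j s. j < m \<Longrightarrow> s \<in> {0..1} \<Longrightarrow> infdist (poly_side m j s) C \<le> \<epsilon>"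
  shows "(poly_side_length m)\<^sup>2 / 12 * (real m * (1 - 16 * \<epsilon> / (poly_side_length m)\<^sup>2)) ^ 3
    \<le> (real n)\<^sup>2 * poly_side_error m C"
proof -
  define N where "N = card C"
  obtain c where "bij_betw c {..<N} C"
    using ex_bij_betw_nat_finite[OF assms(2)] by (auto simp: N_def atLeast0LessThan)
  then have C: "C = c ` {..<N}"
    by (simp add: bij_betw_def)
  have "0 < N"
    using assms(1-3) poly_vertices_nonempty[of m] by (auto simp: N_def card_gt_0_iff)
  then have "(poly_side_length m)\<^sup>2 / 12 * (real m * (1 - 2 * (8 * \<epsilon> / (poly_side_length m)\<^sup>2))) ^ 3
      \<le> (real N)\<^sup>2 * poly_side_error m C"
    unfolding C using assms(1,5) near[unfolded C] by (intro poly_side_error_ge_enum)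
  also have "\<dots> \<le> (real n)\<^sup>2 * poly_side_error m C"
    using assms(4) poly_side_error_nonneg by (intro mult_right_mono power_mono) (auto simp: N_def)
  finally show ?thesis
    by simp
qed

lemma poly_side_error_ge:
  fixes m n :: nat
  defines "L \<equiv> poly_side_length m"
  defines "K \<equiv> L\<^sup>2 * (real m)\<^sup>2 / 12"
  assumes "3 \<le> m" "finite C" "poly_vertices m \<subseteq> C" "card C \<le> n" "K \<le> real n"
  shows "K * (1 - 16 * root 3 (8 * L * real m / real n) / L\<^sup>2) ^ 3 \<le> (real n)\<^sup>2 * poly_side_error m C / real m"
proof -
  define \<epsilon> where "\<epsilon> = root 3 (8 * L * real m / real n)"
  have L: "0 < L"
    using poly_side_length_pos[of m] assms(3) by (simp add: L_def)
  have "0 < card C"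
    using assms(3-5) poly_vertices_nonempty[of m] by (auto simp: card_gt_0_iff)
  then have n: "0 < n"
    using assms(6) by simp
  have \<epsilon>: "0 \<le> \<epsilon>"
    using L by (simp add: \<epsilon>_def)
  show ?thesis
  proof (cases "real m / real n \<le> poly_side_error m C")
    case True
    have "(1 - 16 * \<epsilon> / L\<^sup>2) ^ 3 \<le> 1 ^ 3"
      using \<epsilon> L by (intro power_mono_odd) auto
    then have "K * (1 - 16 * \<epsilon> / L\<^sup>2) ^ 3 \<le> real n"
      using assms(7) mult_left_mono[of _ 1 K] by (fastforce simp: K_def)
    also have "\<dots> \<le> (real n)\<^sup>2 * poly_side_error m C / real m"
      using True n assms(3) by (simp add: field_simps power2_eq_square)
    finally show ?thesis
      by (simp add: \<epsilon>_def)
  next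
    case False
    \<comment> \<open>A small error forces the whole boundary to lie within \<open>\<epsilon>\<close> of the codebook.\<close>
    have "8 * L * poly_side_error m C \<le> 8 * L * (real m / real n)"
      using False L by (intro mult_left_mono) auto
    then have "root 3 (8 * L * poly_side_error m C) \<le> \<epsilon>"
      unfolding \<epsilon>_def by (intro real_root_le_mono) auto
    then have "infdist (poly_side m j s) C \<le> \<epsilon>" if "j < m" "s \<in> {0..1}" for j s
      using infdist_poly_side_le_root_error[OF assms(3,5) that(1), of s] that(2)
      by (auto simp: L_def intro: order_trans)
    then have "L\<^sup>2 / 12 * (real m * (1 - 16 * \<epsilon> / L\<^sup>2)) ^ 3 \<le> (real n)\<^sup>2 * poly_side_error m C"
      unfolding L_def using \<epsilon> by (intro poly_side_error_ge_of_near[OF assms(3-6)])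
    moreover have "L\<^sup>2 / 12 * (real m * x) ^ 3 = K * x ^ 3 * real m" for x
      by (simp add: K_def power_mult_distrib power3_eq_cube power2_eq_square)
    ultimately have "K * (1 - 16 * \<epsilon> / L\<^sup>2) ^ 3 * real m \<le> (real n)\<^sup>2 * poly_side_error m C"
      by simp
    then show ?thesis
      using assms(3) by (simp add: \<epsilon>_def pos_le_divide_eq)
  qed
qed

lemma poly_cond_quant_error_ge:
  fixes m n :: nat
  defines "L \<equiv> poly_side_length m"
  defines "K \<equiv> L\<^sup>2 * (real m)\<^sup>2 / 12"
  assumes "3 \<le> m" "m \<le> n" "K \<le> real n"
  shows "K * (1 - 16 * root 3 (8 * L * real m / real n) / L\<^sup>2) ^ 3
    \<le> (real n)\<^sup>2 * cond_quant_error (poly_measure m) (poly_vertices m) n"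
proof -
  have n: "0 < real n"
    using assms(3,4) by simp
  have "K * (1 - 16 * root 3 (8 * L * real m / real n) / L\<^sup>2) ^ 3 / (real n)\<^sup>2
      \<le> cond_quant_error (poly_measure m) (poly_vertices m) n"
  proof (rule cond_quant_error_ge)
    fix \<alpha> :: "(real^2) set"
    assume \<alpha>: "finite \<alpha>" "card \<alpha> \<le> n - card (poly_vertices m)"
    have "card (\<alpha> \<union> poly_vertices m) \<le> n"
      using card_Un_le[of \<alpha> "poly_vertices m"] \<alpha>(2) card_poly_vertices_le[of m] assms(4) by linarith
    then have "K * (1 - 16 * root 3 (8 * L * real m / real n) / L\<^sup>2) ^ 3
        \<le> (real n)\<^sup>2 * (poly_side_error m (\<alpha> \<union> poly_vertices m) / m)"
      using poly_side_error_ge[OF assms(3) _ _ _ assms(5)[unfolded K_def L_def]] \<alpha>(1)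
      by (simp add: K_def L_def)
    then show "K * (1 - 16 * root 3 (8 * L * real m / real n) / L\<^sup>2) ^ 3 / (real n)\<^sup>2
        \<le> (\<integral>x. Min ((\<lambda>a. (norm (x - a))\<^sup>2) ` (\<alpha> \<union> poly_vertices m)) \<partial>poly_measure m)"
      using n assms(3) \<alpha>(1) by (simp add: integral_poly_measure_quant pos_divide_le_eq mult.commute)
  qed
  then show ?thesis
    using n by (simp add: pos_divide_le_eq mult.commute)
qed

lemma eventually_poly_cond_quant_error_le:
  assumes "3 \<le> m"
  shows "\<forall>\<^sub>F n in sequentially. cond_quant_error (poly_measure m) (poly_vertices m) n
    \<le> (poly_side_length m)\<^sup>2 * (real m)\<^sup>2 / (12 * (real n - real m)\<^sup>2)"
  using eventually_gt_at_top[of m] by eventually_elim (rule poly_cond_quant_error_le[OF assms])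

lemma poly_cond_quant_error_tendsto_zero:
  assumes "3 \<le> m"
  shows "(\<lambda>n. cond_quant_error (poly_measure m) (poly_vertices m) n) \<longlonglongrightarrow> 0"
proof (rule tendsto_sandwich[OF _ eventually_poly_cond_quant_error_le[OF assms] tendsto_const])
  show "\<forall>\<^sub>F n in sequentially. 0 \<le> cond_quant_error (poly_measure m) (poly_vertices m) n"
    using assms by (intro always_eventually allI cond_quant_error_nonneg poly_vertices_nonempty) auto
  show "(\<lambda>n. (poly_side_length m)\<^sup>2 * (real m)\<^sup>2 / (12 * (real n - real m)\<^sup>2)) \<longlonglongrightarrow> 0"
    by real_asymp
qed

lemma poly_scaled_cond_quant_error_tendsto:
  assumes "3 \<le> m"
  shows "(\<lambda>n. (real n)\<^sup>2 * cond_quant_error (poly_measure m) (poly_vertices m) n)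
    \<longlonglongrightarrow> (poly_side_length m)\<^sup>2 * (real m)\<^sup>2 / 12"
proof -
  define L where "L = poly_side_length m"
  define K where "K = L\<^sup>2 * (real m)\<^sup>2 / 12"
  have lower: "\<forall>\<^sub>F n in sequentially. K * (1 - 16 * root 3 (8 * L * real m / real n) / L\<^sup>2) ^ 3
      \<le> (real n)\<^sup>2 * cond_quant_error (poly_measure m) (poly_vertices m) n"
    using eventually_ge_at_top[of m] filterlim_real_sequentially[unfolded filterlim_at_top, rule_format, of K]
    by eventually_elim (use poly_cond_quant_error_ge[OF assms] in \<open>simp add: K_def L_def\<close>)
  have upper: "\<forall>\<^sub>F n in sequentially. (real n)\<^sup>2 * cond_quant_error (poly_measure m) (poly_vertices m) n
      \<le> (real n)\<^sup>2 * (K / (real n - real m)\<^sup>2)"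
    using eventually_poly_cond_quant_error_le[OF assms]
    by eventually_elim (rule mult_left_mono, simp_all add: K_def L_def)
  have "(\<lambda>n. root 3 (8 * L * real m / real n)) \<longlonglongrightarrow> root 3 0"
    by (intro tendsto_real_root) real_asymp
  then have "(\<lambda>n. K * (1 - 16 * root 3 (8 * L * real m / real n) / L\<^sup>2) ^ 3) \<longlonglongrightarrow> K"
    using poly_side_length_pos[of m] assms by (auto simp: L_def intro!: tendsto_eq_intros)
  moreover have "(\<lambda>n. (real n)\<^sup>2 * (K / (real n - real m)\<^sup>2)) \<longlonglongrightarrow> K"
    by real_asymp
  ultimately show ?thesis
    unfolding K_def[symmetric] L_def[symmetric] using tendsto_sandwich[OF lower upper] by blast
qed

theorem theorem5p6:
  fixes m :: nat
  assumes "m \<ge> 3"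
  shows "convergent (\<lambda>n. cond_quant_error (poly_measure m) (poly_vertices m) n)
    \<and> (\<lambda>n. (real n)\<^sup>2 * (cond_quant_error (poly_measure m) (poly_vertices m) n
              - lim (\<lambda>k. cond_quant_error (poly_measure m) (poly_vertices m) k)))
      \<longlonglongrightarrow> (1 / 3) * (real m)\<^sup>2 * (sin (pi / real m))\<^sup>2"
proof -
  have K: "(1 / 3) * (real m)\<^sup>2 * (sin (pi / real m))\<^sup>2 = (poly_side_length m)\<^sup>2 * (real m)\<^sup>2 / 12"
    by (simp add: poly_side_length_def power_mult_distrib)
  show ?thesis
    unfolding K
    using poly_cond_quant_error_tendsto_zero[OF assms] poly_scaled_cond_quant_error_tendsto[OF assms]
    by (simp add: convergentI limI)
qed

end
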